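(* Let $d\geq 1$ and $r\geq 2$ be integers. Then $M(2r-1,r,d)\le d+1$.
   Context: All measures are probability measures on $\mathbb{R}^d$ absolutely continuous with respect to Lebesgue measure. A convex partition of $\mathbb{R}^d$ into $n$ parts is an ordered tuple $(K_1,\dots,K_n)$ of closed convex sets with union $\mathbb{R}^d$ and pairwise disjoint interiors (some parts may be empty). $M(n,r,d)$ is the largest integer $M$ such that for any $M$ measures $\mu_1,\dots,\mu_M$ on $\mathbb{R}^d$ there is a convex partition $(K_1,\dots,K_n)$ of $\mathbb{R}^d$ into $n$ parts and a map $\ell\colon[n]\to[r]$ with $\mu_j\big(\bigcup_{i\in\ell^{-1}(s)}K_i\big)=\tfrac1r$ for all $1\le j\le M$ and $1\le s\le r$. *)

theory Defs
  imports "HOL-Probability.Probability"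
begin

definition convex_partition :: "nat \<Rightarrow> (nat \<Rightarrow> 'a::euclidean_space set) \<Rightarrow> bool" where
  "convex_partition n K \<longleftrightarrow>
     (\<forall>i<n. closed (K i) \<and> convex (K i)) \<and>
     (\<Union>i<n. K i) = UNIV \<and>
     (\<forall>i<n. \<forall>j<n. i \<noteq> j \<longrightarrow> interior (K i) \<inter> interior (K j) = {})"

definition admissible_measure :: "'a::euclidean_space measure \<Rightarrow> bool" where
  "admissible_measure \<mu> \<longleftrightarrow>
     prob_space \<mu> \<and> sets \<mu> = sets lborel \<and> absolutely_continuous lborel \<mu>"

definition fair_split_prop :: "'a::euclidean_space itself \<Rightarrow> nat \<Rightarrow> nat \<Rightarrow> nat \<Rightarrow> bool" where
  "fair_split_prop _ n r m \<longleftrightarrow>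
     (\<forall>\<mu> :: nat \<Rightarrow> 'a measure. (\<forall>j<m. admissible_measure (\<mu> j)) \<longrightarrow>
        (\<exists>K lab. convex_partition n K \<and> (\<forall>i<n. lab i < r) \<and>
           (\<forall>j<m. \<forall>s<r. measure (\<mu> j) (\<Union>i\<in>{i. i < n \<and> lab i = s}. K i) = 1 / real r)))"

text \<open>M(n, r, d) with d = DIM('a).\<close>
definition M_num :: "'a::euclidean_space itself \<Rightarrow> nat \<Rightarrow> nat \<Rightarrow> nat" where
  "M_num T n r = (GREATEST m. fair_split_prop T n r m)"

end

theory Submission
  imports Defs
begin

(*
  By pigeonhole, some label class of a partition into 2r - 1 parts is a single convex part A.
  Test with d + 2 uniform measures on unit boxes: the box at the origin, a box far out on each
  coordinate axis, and a box far out on the negative diagonal. Having measure 1/r > 0 for the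
  last d + 1 measures, A meets each of these far boxes; points chosen in them always span a
  simplex containing the box at the origin, so A contains it and has measure 1, not 1/r, for
  the first measure.
*)

definition unit_box :: "'a::euclidean_space \<Rightarrow> 'a set" where
  "unit_box v = cbox v (v + One)"

lemma mem_unit_box: "x \<in> unit_box v \<longleftrightarrow> (\<forall>c\<in>Basis. v \<bullet> c \<le> x \<bullet> c \<and> x \<bullet> c \<le> v \<bullet> c + 1)"
  by (simp add: unit_box_def mem_box inner_add_left)

lemma unit_box_in_sets_lborel [measurable]: "unit_box v \<in> sets lborel"
  by (simp add: unit_box_def)

lemma emeasure_lborel_unit_box [simp]: "emeasure lborel (unit_box v) = 1"
  by (simp add: unit_box_def emeasure_lborel_cbox_eq inner_add_left)

lemma measure_lborel_unit_box [simp]: "measure lborel (unit_box v) = 1"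
  by (simp add: measure_def)

lemma measure_uniform_unit_box:
  "A \<in> sets lborel \<Longrightarrow> measure (uniform_measure lborel (unit_box v)) A = measure lborel (unit_box v \<inter> A)"
  by simp

lemma admissible_uniform_measure:
  assumes "emeasure lborel S \<noteq> 0" "emeasure lborel S \<noteq> \<infinity>"
  shows "admissible_measure (uniform_measure lborel S)"
  unfolding admissible_measure_def
proof (intro conjI)
  show "prob_space (uniform_measure lborel S)"
    using assms by (rule prob_space_uniform_measure)
  show "absolutely_continuous lborel (uniform_measure lborel S)"
    using emeasure_neq_0_sets[OF assms(1)] unfolding uniform_measure_def
    by (intro absolutely_continuousI_density) simp
qed simp

lemma mult_ge_of_mem_unit_interval:
  fixes \<alpha> t L :: real
  assumes "L \<le> t" "t \<le> L + 1"
  shows "\<alpha> * L - max (-\<alpha>) 0 \<le> \<alpha> * t"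
proof (cases "\<alpha> \<ge> 0")
  case True
  then show ?thesis using mult_left_mono[OF assms(1) True] by simp
next
  case False
  then have "\<alpha> * (L + 1) \<le> \<alpha> * t" using assms(2) by (simp add: mult_left_mono_neg)
  then show ?thesis using False by (simp add: algebra_simps)
qed

lemma corner_points_not_all_below:
  fixes a x qs :: "'a::euclidean_space" and q :: "'a \<Rightarrow> 'a" and N :: real
  assumes N: "4 * real DIM('a) \<le> N"
    and x: "x \<in> unit_box 0"
    and q: "\<forall>b\<in>Basis. q b \<in> unit_box (N *\<^sub>R b)"
    and qs: "qs \<in> unit_box (- (N + 1) *\<^sub>R One)"
  shows "\<exists>p\<in>insert qs (q ` Basis). a \<bullet> x \<le> a \<bullet> p"
proof (rule ccontr)
  assume "\<not> ?thesis"
  then have below_q: "\<forall>b\<in>Basis. a \<bullet> q b < a \<bullet> x" and below_qs: "a \<bullet> qs < a \<bullet> x"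
    by (auto simp: not_le)
  define P where "P = (\<Sum>c\<in>Basis. max (a \<bullet> c) 0)"
  define Ng where "Ng = (\<Sum>c\<in>Basis. max (- (a \<bullet> c)) 0)"
  \<comment> \<open>The q b force every coordinate of a below (P + Ng) / N, so 3 P \<le> Ng,
    while qs forces N Ng < (N + 2) P.\<close>
  have P_nonneg: "P \<ge> 0" and Ng_nonneg: "Ng \<ge> 0"
    unfolding P_def Ng_def by (auto intro: sum_nonneg)
  have dim_pos: "real DIM('a) \<ge> 1" by simp
  then have N_pos: "N > 0" using N by linarith
  have ax: "a \<bullet> x \<le> P"
  proof -
    have "a \<bullet> x = (\<Sum>c\<in>Basis. (a \<bullet> c) * (x \<bullet> c))" by (rule euclidean_inner)
    also have "\<dots> \<le> P" unfolding P_def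
    proof (intro sum_mono)
      fix c :: 'a assume c: "c \<in> Basis"
      then have "0 \<le> x \<bullet> c" "x \<bullet> c \<le> 1" using x by (auto simp: mem_unit_box)
      then show "(a \<bullet> c) * (x \<bullet> c) \<le> max (a \<bullet> c) 0"
        by (cases "a \<bullet> c \<ge> 0") (auto intro: mult_left_le mult_nonpos_nonneg)
    qed
    finally show ?thesis .
  qed
  have aq: "N * (a \<bullet> b) - Ng \<le> a \<bullet> q b" if b: "b \<in> Basis" for b
  proof -
    have "N * (a \<bullet> b) - Ng = (\<Sum>c\<in>Basis. (a \<bullet> c) * (N * (b \<bullet> c)) - max (- (a \<bullet> c)) 0)"
      by (simp add: Ng_def sum_subtractf euclidean_inner[of a b] sum_distrib_left algebra_simps)
    also have "\<dots> \<le> (\<Sum>c\<in>Basis. (a \<bullet> c) * (q b \<bullet> c))"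
      using q b by (intro sum_mono mult_ge_of_mem_unit_interval) (auto simp: mem_unit_box)
    also have "\<dots> = a \<bullet> q b" by (rule euclidean_inner[symmetric])
    finally show ?thesis .
  qed
  have aqs: "N * Ng - (N + 1) * P \<le> a \<bullet> qs"
  proof -
    have "N * Ng - (N + 1) * P = (\<Sum>c\<in>Basis. N * max (- (a \<bullet> c)) 0 - (N + 1) * max (a \<bullet> c) 0)"
      by (simp add: Ng_def P_def sum_subtractf sum_distrib_left)
    also have "\<dots> = (\<Sum>c\<in>Basis. (a \<bullet> c) * (- (N + 1)) - max (- (a \<bullet> c)) 0)"
      by (intro sum.cong) (auto simp: max_def algebra_simps)
    also have "\<dots> \<le> (\<Sum>c\<in>Basis. (a \<bullet> c) * (qs \<bullet> c))"
      using qs by (intro sum_mono mult_ge_of_mem_unit_interval) (auto simp: mem_unit_box)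
    also have "\<dots> = a \<bullet> qs" by (rule euclidean_inner[symmetric])
    finally show ?thesis .
  qed
  have coord_bound: "max (a \<bullet> b) 0 \<le> (P + Ng) / N" if "b \<in> Basis" for b
  proof -
    have "N * (a \<bullet> b) < P + Ng" using aq[OF that] below_q that ax by fastforce
    then show ?thesis using N_pos P_nonneg Ng_nonneg by (simp add: field_simps)
  qed
  have "P \<le> real DIM('a) * ((P + Ng) / N)"
    using sum_mono[OF coord_bound] by (simp add: P_def)
  also have "\<dots> \<le> (P + Ng) / 4"
  proof -
    have "4 * real DIM('a) * (P + Ng) \<le> N * (P + Ng)"
      using N P_nonneg Ng_nonneg by (intro mult_right_mono) auto
    then show ?thesis using N_pos by (simp add: field_simps)
  qed
  finally have "3 * P \<le> Ng" by simp
  then have "(N + 2) * (3 * P) \<le> (N + 2) * Ng" using N_pos by (intro mult_left_mono) auto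
  moreover have "N * Ng < (N + 2) * P" using aqs below_qs ax by (simp add: algebra_simps)
  ultimately have "(2 * N - 2) * Ng < 0" by (simp add: algebra_simps)
  moreover have "2 * N - 2 \<ge> 0" using N dim_pos by linarith
  ultimately show False using Ng_nonneg by (simp add: mult_less_0_iff)
qed

lemma unit_box_0_subset_if_meets_far_boxes:
  fixes A :: "'a::euclidean_space set" and N :: real
  assumes "convex A" "closed A" "4 * real DIM('a) \<le> N"
    and "\<forall>b\<in>Basis. unit_box (N *\<^sub>R b) \<inter> A \<noteq> {}"
    and "unit_box (- (N + 1) *\<^sub>R One) \<inter> A \<noteq> {}"
  shows "unit_box 0 \<subseteq> A"
proof
  fix x :: 'a assume x: "x \<in> unit_box 0"
  obtain q where q: "\<forall>b\<in>Basis. q b \<in> unit_box (N *\<^sub>R b) \<inter> A"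
    using bchoice[of Basis "\<lambda>b y. y \<in> unit_box (N *\<^sub>R b) \<inter> A"] assms(4) by blast
  obtain qs where qs: "qs \<in> unit_box (- (N + 1) *\<^sub>R One)" "qs \<in> A"
    using assms(5) by blast
  show "x \<in> A"
  proof (rule ccontr)
    assume "x \<notin> A"
    then obtain a \<beta> where "a \<bullet> x < \<beta>" "\<forall>z\<in>A. \<beta> < a \<bullet> z"
      using separating_hyperplane_closed_point[OF assms(1,2)] by blast
    moreover obtain p where "p \<in> insert qs (q ` Basis)" "- a \<bullet> x \<le> - a \<bullet> p"
      using corner_points_not_all_below[OF assms(3) x _ qs(1), of q "- a"] q by blast
    ultimately show False using q qs(2) by fastforce
  qed
qed

lemma exists_label_class_card_le_1:
  fixes lab :: "nat \<Rightarrow> nat"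
  assumes lab: "\<forall>i<n. lab i < r" and n: "n < 2 * r"
  shows "\<exists>s<r. card {i. i < n \<and> lab i = s} \<le> 1"
proof (rule ccontr)
  assume "\<not> ?thesis"
  then have big: "\<forall>s\<in>{..<r}. 2 \<le> card {i. i < n \<and> lab i = s}" by auto
  have "{..<n} = (\<Union>s\<in>{..<r}. {i. i < n \<and> lab i = s})" using lab by auto
  then have "n = card (\<Union>s\<in>{..<r}. {i. i < n \<and> lab i = s})" by (metis card_lessThan)
  also have "\<dots> = (\<Sum>s\<in>{..<r}. card {i. i < n \<and> lab i = s})"
    by (rule card_UN_disjoint) auto
  also have "\<dots> \<ge> (\<Sum>s\<in>{..<r}. 2)" using big by (intro sum_mono) auto
  finally show False using n by simp
qed

lemma fair_split_single_part:
  fixes K :: "nat \<Rightarrow> 'a set" and \<mu> :: "nat \<Rightarrow> 'a measure"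
  assumes lab: "\<forall>i<n. lab i < r" and n: "n < 2 * r" and m: "0 < m"
    and fair: "\<forall>j<m. \<forall>s<r. measure (\<mu> j) (\<Union>i\<in>{i. i < n \<and> lab i = s}. K i) = 1 / real r"
  shows "\<exists>i<n. \<forall>j<m. measure (\<mu> j) (K i) = 1 / real r"
proof -
  obtain s where s: "s < r" "card {i. i < n \<and> lab i = s} \<le> 1"
    using exists_label_class_card_le_1[OF lab n] by blast
  define I where "I = {i. i < n \<and> lab i = s}"
  have I_fair: "\<forall>j<m. measure (\<mu> j) (\<Union>i\<in>I. K i) = 1 / real r"
    using fair s(1) by (simp add: I_def)
  have "I \<noteq> {}"
  proof
    assume "I = {}"
    then have "measure (\<mu> 0) (\<Union>i\<in>I. K i) = 0" by simp
    with I_fair m s(1) show False by simp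
  qed
  moreover have "finite I" "card I \<le> 1" using s(2) by (simp_all add: I_def)
  ultimately have "card I = 1" by (simp add: le_Suc_eq)
  then obtain i where "I = {i}" by (rule card_1_singletonE)
  then show ?thesis using I_fair by (auto simp: I_def)
qed

lemma fair_split_prop_0:
  assumes "1 \<le> n" "1 \<le> r"
  shows "fair_split_prop T n r 0"
proof -
  have "convex_partition n (\<lambda>i. if i = 0 then UNIV else {})"
    using assms(1) by (auto simp: convex_partition_def)
  moreover have "\<forall>i<n. (0::nat) < r" using assms(2) by simp
  ultimately show ?thesis unfolding fair_split_prop_def by (intro allI impI exI conjI) auto
qed

lemma M_num_le:
  assumes "fair_split_prop T n r 0" and "\<And>m. fair_split_prop T n r m \<Longrightarrow> m \<le> B"
  shows "M_num T n r \<le> B"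
proof -
  have "fair_split_prop T n r (Greatest (fair_split_prop T n r))"
    using assms by (rule GreatestI_nat)
  then show ?thesis unfolding M_num_def by (rule assms(2))
qed

lemma fair_split_prop_le_DIM:
  assumes r: "r \<ge> 2" and fair: "fair_split_prop TYPE('a::euclidean_space) (2 * r - 1) r m"
  shows "m \<le> DIM('a) + 1"
proof (rule ccontr)
  assume "\<not> ?thesis"
  then have m: "DIM('a) + 2 \<le> m" by simp
  define N where "N = 4 * real DIM('a)"
  obtain f where f: "bij_betw f {1..DIM('a)} (Basis :: 'a set)"
    using ex_bij_betw_nat_finite_1[of "Basis :: 'a set"] by auto
  define corner :: "nat \<Rightarrow> 'a" where
    "corner j = (if j = 0 then 0 else if j \<le> DIM('a) then N *\<^sub>R f j else - (N + 1) *\<^sub>R One)" for j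
  define \<mu> where "\<mu> j = uniform_measure lborel (unit_box (corner j))" for j
  have "admissible_measure (\<mu> j)" for j
    unfolding \<mu>_def by (rule admissible_uniform_measure) simp_all
  then obtain K lab where part: "convex_partition (2 * r - 1) K" and lab: "\<forall>i<2 * r - 1. lab i < r"
    and eq: "\<forall>j<m. \<forall>s<r. measure (\<mu> j) (\<Union>i\<in>{i. i < 2 * r - 1 \<and> lab i = s}. K i) = 1 / real r"
    using fair unfolding fair_split_prop_def by blast
  obtain i where i: "i < 2 * r - 1" and Ki: "\<forall>j<m. measure (\<mu> j) (K i) = 1 / real r"
    using fair_split_single_part[OF lab _ _ eq] r m by auto
  have "closed (K i)" "convex (K i)" using part i by (auto simp: convex_partition_def)
  then have Ki_borel: "K i \<in> sets lborel" by simp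
  have Ki_box: "measure lborel (unit_box (corner j) \<inter> K i) = 1 / real r" if "j < m" for j
    using Ki that measure_uniform_unit_box[OF Ki_borel] by (simp add: \<mu>_def)
  have meets: "unit_box (corner j) \<inter> K i \<noteq> {}" if "j < m" for j
    using Ki_box[OF that] r by auto
  have "unit_box 0 \<subseteq> K i"
  proof (rule unit_box_0_subset_if_meets_far_boxes)
    show "\<forall>b\<in>Basis. unit_box (N *\<^sub>R b) \<inter> K i \<noteq> {}"
    proof
      fix b :: 'a assume "b \<in> Basis"
      then obtain j where "j \<in> {1..DIM('a)}" "b = f j"
        using f by (metis bij_betw_imp_surj_on imageE)
      then show "unit_box (N *\<^sub>R b) \<inter> K i \<noteq> {}" using meets[of j] m by (simp add: corner_def)
    qed
    show "unit_box (- (N + 1) *\<^sub>R One) \<inter> K i \<noteq> {}"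
      using meets[of "DIM('a) + 1"] m by (simp add: corner_def)
  qed (use \<open>closed (K i)\<close> \<open>convex (K i)\<close> N_def in auto)
  then have "measure lborel (unit_box (corner 0) \<inter> K i) = 1"
    by (simp add: corner_def Int_absorb2)
  then show False using Ki_box[of 0] m r by simp
qed

theorem mainTheorem4:
  fixes r :: nat
  assumes "r \<ge> 2"
  shows "M_num TYPE('a::euclidean_space) (2 * r - 1) r \<le> DIM('a) + 1"
  using assms by (intro M_num_le fair_split_prop_0 fair_split_prop_le_DIM) auto

end
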